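(* In every run of the algorithm described in the context, at every time and for every $i\in\{1,\dots,n\}$, we have $w\_sync_i[i]=\max\{w\_sync_i[j] : 1\le j\le n\}$.
   Context: Model. There are $n$ asynchronous processes $p_1,\dots,p_n$, of which up to $t<n/2$ may crash; a process runs its algorithm correctly until it crashes. Each ordered pair of processes is linked by a reliable (no loss, corruption, duplication or creation), asynchronous, not necessarily FIFO channel. $p_w$ is the single writer, invoking writes sequentially; $v_0$ is the initial value. Messages: $\textsc{write}(b,v)$ with $b\in\{0,1\}$, which stands for the two types $\textsc{write0}(v)$ and $\textsc{write1}(v)$; $\textsc{read}()$; $\textsc{proceed}()$. Variables of $p_i$. These are: $history_i$ with $history_i[0]=v_0$; $w\_sync_i[1..n]$, initially all $0$; $r\_sync_i[1..n]$, initially all $0$. $\mathsf{write}(v)$ by $p_w$: $wsn\gets w\_sync_w[w]+1$; $w\_sync_w[w]\gets wsn$; $history_w[wsn]\gets v$. Send $\textsc{write}(wsn\bmod 2,v)$ to each $p_j$ with $w\_sync_w[j]=wsn-1$. Wait until at least $n-t$ indices $j$ have $w\_sync_w[j]=wsn$. Return. $\mathsf{read}()$ by $p_i$: $r\_sync_i[i]\gets r\_sync_i[i]+1$ and call the new value $rsn$. Send $\textsc{read}()$ to all $p_j$ with $j\ne i$. Wait until at least $n-t$ indices $j$ have $r\_sync_i[j]=rsn$. Let $sn\gets w\_sync_i[i]$. Wait until at least $n-t$ indices $j$ have $w\_sync_i[j]\ge sn$. Return $history_i[sn]$. On receipt of $\textsc{write}(b,v)$ from $p_j$ at $p_i$: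 Wait until $b=(w\_sync_i[j]+1)\bmod 2$. Let $wsn\gets w\_sync_i[j]+1$. If $wsn=w\_sync_i[i]+1$, then set $w\_sync_i[i]\gets wsn$ and $history_i[wsn]\gets v$, and send $\textsc{write}(wsn\bmod 2,v)$ to each $p_\ell$ with $w\_sync_i[\ell]=wsn-1$. Else, if $wsn<w\_sync_i[i]$, send $\textsc{write}((wsn+1)\bmod 2,history_i[wsn+1])$ to $p_j$. Finally set $w\_sync_i[j]\gets wsn$. On receipt of $\textsc{read}()$ from $p_j$ at $p_i$: Let $sn\gets w\_sync_i[i]$; wait until $w\_sync_i[j]\ge sn$; send $\textsc{proceed}()$ to $p_j$. On receipt of $\textsc{proceed}()$ from $p_j$ at $p_i$: $r\_sync_i[j]\gets r\_sync_i[j]+1$. Message handlers run concurrently; a waiting handler does not block the reception of other messages. *)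

theory Defs
  imports Main "HOL-Library.Multiset"
begin

text \<open>
  Processes are indexed by 1..n (natural numbers).
  Each code block that does not contain a wait (or the part of a handler following a
  satisfied wait) executes atomically.
\<close>

(* message WRITE b v (b in {0,1}), READ, PROCEED *)
datatype 'v msg = WRITE nat 'v | READ | PROCEED

datatype op_state =
    Idle
  | Writing nat      (* write with sequence number wsn, waiting for n-t acks *)
  | Reading1 nat     (* read with rsn, first wait *)
  | Reading2 nat     (* read with sn, second wait *)

(* handler instances that have received their message and are waiting *)
datatype 'v handler =
    HWrite nat nat 'v   (* sender j, bit b, value v : waiting until b = (w_sync[j]+1) mod 2 *)
  | HRead nat nat       (* sender j, sn : waiting until w_sync[j] >= sn *)

record 'v lstate =
  hist    :: "nat \<Rightarrow> 'v"
  wsync   :: "nat \<Rightarrow> nat"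
  rsync   :: "nat \<Rightarrow> nat"
  opst    :: op_state
  pend    :: "'v handler multiset"
  crashed :: bool

record 'v config =
  loc  :: "nat \<Rightarrow> 'v lstate"
  chan :: "nat \<Rightarrow> nat \<Rightarrow> 'v msg multiset"   (* chan a b : messages in transit from p_a to p_b *)

definition send_to ::
  "nat \<Rightarrow> nat set \<Rightarrow> 'v msg \<Rightarrow> (nat \<Rightarrow> nat \<Rightarrow> 'v msg multiset) \<Rightarrow> (nat \<Rightarrow> nat \<Rightarrow> 'v msg multiset)" where
  "send_to i S m ch = (\<lambda>a b. if a = i \<and> b \<in> S then ch a b + {#m#} else ch a b)"

definition init_lstate :: "'v \<Rightarrow> 'v lstate" where
  "init_lstate v0 = \<lparr> hist = (\<lambda>_. undefined)(0 := v0), wsync = (\<lambda>_. 0), rsync = (\<lambda>_. 0),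
                      opst = Idle, pend = {#}, crashed = False \<rparr>"

definition init_config :: "'v \<Rightarrow> 'v config" where
  "init_config v0 = \<lparr> loc = (\<lambda>_. init_lstate v0), chan = (\<lambda>_ _. {#}) \<rparr>"

(* one atomic step of the system; n processes, at most t crashes, writer w *)
inductive step :: "nat \<Rightarrow> nat \<Rightarrow> nat \<Rightarrow> 'v config \<Rightarrow> 'v config \<Rightarrow> bool"
  for n t w where

  crash:
  "\<lbrakk> i \<in> {1..n}; \<not> crashed (loc s i);
     card {j \<in> {1..n}. crashed (loc s j)} < t \<rbrakk>
   \<Longrightarrow> step n t w s (s\<lparr> loc := (loc s)(i := (loc s i)\<lparr> crashed := True \<rparr>) \<rparr>)"

| write_invoke:
  "\<lbrakk> \<not> crashed (loc s w); opst (loc s w) = Idle;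
     wsn = wsync (loc s w) w + 1;
     ws' = (wsync (loc s w))(w := wsn) \<rbrakk>
   \<Longrightarrow> step n t w s
        \<lparr> loc = (loc s)(w := (loc s w)\<lparr> wsync := ws', hist := (hist (loc s w))(wsn := v),
                                        opst := Writing wsn \<rparr>),
          chan = send_to w {j \<in> {1..n}. ws' j = wsn - 1} (WRITE (wsn mod 2) v) (chan s) \<rparr>"

| write_return:
  "\<lbrakk> \<not> crashed (loc s w); opst (loc s w) = Writing wsn;
     card {j \<in> {1..n}. wsync (loc s w) j = wsn} \<ge> n - t \<rbrakk>
   \<Longrightarrow> step n t w s (s\<lparr> loc := (loc s)(w := (loc s w)\<lparr> opst := Idle \<rparr>) \<rparr>)"

| read_invoke:
  "\<lbrakk> i \<in> {1..n}; \<not> crashed (loc s i); opst (loc s i) = Idle;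
     rsn = rsync (loc s i) i + 1 \<rbrakk>
   \<Longrightarrow> step n t w s
        \<lparr> loc = (loc s)(i := (loc s i)\<lparr> rsync := (rsync (loc s i))(i := rsn), opst := Reading1 rsn \<rparr>),
          chan = send_to i {j \<in> {1..n}. j \<noteq> i} READ (chan s) \<rparr>"

| read_phase2:
  "\<lbrakk> i \<in> {1..n}; \<not> crashed (loc s i); opst (loc s i) = Reading1 rsn;
     card {j \<in> {1..n}. rsync (loc s i) j = rsn} \<ge> n - t \<rbrakk>
   \<Longrightarrow> step n t w s (s\<lparr> loc := (loc s)(i := (loc s i)\<lparr> opst := Reading2 (wsync (loc s i) i) \<rparr>) \<rparr>)"

| read_return:
  "\<lbrakk> i \<in> {1..n}; \<not> crashed (loc s i); opst (loc s i) = Reading2 sn;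
     card {j \<in> {1..n}. wsync (loc s i) j \<ge> sn} \<ge> n - t \<rbrakk>
   \<Longrightarrow> step n t w s (s\<lparr> loc := (loc s)(i := (loc s i)\<lparr> opst := Idle \<rparr>) \<rparr>)"
   (* the read returns hist (loc s i) sn *)

| recv_write:
  "\<lbrakk> i \<in> {1..n}; j \<in> {1..n}; \<not> crashed (loc s i); WRITE b v \<in># chan s j i \<rbrakk>
   \<Longrightarrow> step n t w s
        \<lparr> loc = (loc s)(i := (loc s i)\<lparr> pend := pend (loc s i) + {# HWrite j b v #} \<rparr>),
          chan = (chan s)(j := (chan s j)(i := chan s j i - {# WRITE b v #})) \<rparr>"

| recv_read:
  "\<lbrakk> i \<in> {1..n}; j \<in> {1..n}; \<not> crashed (loc s i); READ \<in># chan s j i \<rbrakk>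
   \<Longrightarrow> step n t w s
        \<lparr> loc = (loc s)(i := (loc s i)\<lparr> pend := pend (loc s i) + {# HRead j (wsync (loc s i) i) #} \<rparr>),
          chan = (chan s)(j := (chan s j)(i := chan s j i - {# READ #})) \<rparr>"

| recv_proceed:
  "\<lbrakk> i \<in> {1..n}; j \<in> {1..n}; \<not> crashed (loc s i); PROCEED \<in># chan s j i \<rbrakk>
   \<Longrightarrow> step n t w s
        \<lparr> loc = (loc s)(i := (loc s i)\<lparr> rsync := (rsync (loc s i))(j := rsync (loc s i) j + 1) \<rparr>),
          chan = (chan s)(j := (chan s j)(i := chan s j i - {# PROCEED #})) \<rparr>"

| exec_write:
  "\<lbrakk> i \<in> {1..n}; \<not> crashed (loc s i); HWrite j b v \<in># pend (loc s i);
     b = (wsync (loc s i) j + 1) mod 2;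
     wsn = wsync (loc s i) j + 1;
     ls = loc s i;
     (ls1, ch1) =
       (if wsn = wsync ls i + 1 then
          (let ws' = (wsync ls)(i := wsn) in
            (ls\<lparr> wsync := ws', hist := (hist ls)(wsn := v) \<rparr>,
             send_to i {l \<in> {1..n}. ws' l = wsn - 1} (WRITE (wsn mod 2) v) (chan s)))
        else if wsn < wsync ls i then
          (ls, send_to i {j} (WRITE ((wsn + 1) mod 2) (hist ls (wsn + 1))) (chan s))
        else (ls, chan s));
     ls2 = ls1\<lparr> wsync := (wsync ls1)(j := wsn), pend := pend ls - {# HWrite j b v #} \<rparr> \<rbrakk>
   \<Longrightarrow> step n t w s \<lparr> loc = (loc s)(i := ls2), chan = ch1 \<rparr>"

| exec_read:
  "\<lbrakk> i \<in> {1..n}; \<not> crashed (loc s i); HRead j sn \<in># pend (loc s i);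
     wsync (loc s i) j \<ge> sn \<rbrakk>
   \<Longrightarrow> step n t w s
        \<lparr> loc = (loc s)(i := (loc s i)\<lparr> pend := pend (loc s i) - {# HRead j sn #} \<rparr>),
          chan = send_to i {j} PROCEED (chan s) \<rparr>"

(* a run: an infinite sequence of configurations starting in the initial configuration,
   each obtained from the previous one by a step or by stuttering (so finite runs are included) *)
definition is_run :: "nat \<Rightarrow> nat \<Rightarrow> nat \<Rightarrow> 'v \<Rightarrow> (nat \<Rightarrow> 'v config) \<Rightarrow> bool" where
  "is_run n t w v0 r \<longleftrightarrow>
     r 0 = init_config v0 \<and> (\<forall>k. step n t w (r k) (r (Suc k)) \<or> r (Suc k) = r k)"

end

theory Submission
  imports Defs
begin

text \<open>Only the handler of a write message from p_j changes an entry w_sync_i[j] with j \<noteq> i,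
  and it raises it by exactly one. The invariant w_sync_i[j] \<le> w_sync_i[i] thus gives a new
  value wsn \<le> w_sync_i[i] + 1, and in the boundary case wsn = w_sync_i[i] + 1 the handler
  raises w_sync_i[i] to wsn in the same atomic step.\<close>

definition wsync_self_max :: "'v config \<Rightarrow> bool" where
  "wsync_self_max s \<longleftrightarrow> (\<forall>i j. wsync (loc s i) j \<le> wsync (loc s i) i)"

lemma run_invariant:
  assumes "is_run n t w v0 r"
    and "P (init_config v0)"
    and "\<And>s s'. step n t w s s' \<Longrightarrow> P s \<Longrightarrow> P s'"
  shows "P (r k)"
proof (induction k)
  case 0
  show ?case using assms(1,2) by (simp add: is_run_def)
next
  case (Suc k)
  then show ?case using assms(1,3) unfolding is_run_def by metis
qed

lemma wsync_self_max_init: "wsync_self_max (init_config v0)"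
  by (simp add: wsync_self_max_def init_config_def init_lstate_def)

lemma wsync_self_max_step:
  assumes "step n t w s s'" "wsync_self_max s"
  shows "wsync_self_max s'"
  using assms
proof (induction rule: step.induct)
  case (exec_write i s j b v wsn ls ls1 ch1 ls2)
  have below: "\<And>a. wsync ls a \<le> wsync ls i"
    using exec_write.prems exec_write.hyps unfolding wsync_self_max_def by simp
  have "\<And>a. wsync ls2 a \<le> wsync ls2 i"
  proof (cases "wsn = wsync ls i + 1")
    case True
    then have "ls1 = ls\<lparr> wsync := (wsync ls)(i := wsn), hist := (hist ls)(wsn := v) \<rparr>"
      using exec_write.hyps by (simp add: Let_def)
    then show "\<And>a. wsync ls2 a \<le> wsync ls2 i"
      using exec_write.hyps True below by (auto simp: le_Suc_eq)
  next
    case False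
    then have "ls1 = ls"
      using exec_write.hyps by (auto split: if_splits)
    moreover have "wsn \<le> wsync ls i"
      using False below[of j] exec_write.hyps by simp
    ultimately show "\<And>a. wsync ls2 a \<le> wsync ls2 i"
      using exec_write.hyps below by auto
  qed
  then show ?case
    using exec_write.prems unfolding wsync_self_max_def by auto
qed (auto simp: wsync_self_max_def le_Suc_eq)

lemma wsync_self_max_run:
  assumes "is_run n t w v0 r"
  shows "wsync_self_max (r k)"
  using assms wsync_self_max_init wsync_self_max_step by (rule run_invariant)

theorem lemma3:
  fixes n t w :: nat and v0 :: 'v and r :: "nat \<Rightarrow> 'v config"
  assumes "2 * t < n"
    and "w \<in> {1..n}"
    and "is_run n t w v0 r"
    and "i \<in> {1..n}"
  shows "wsync (loc (r k) i) i = Max ((\<lambda>j. wsync (loc (r k) i) j) ` {1..n})"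
proof -
  have "\<And>j. wsync (loc (r k) i) j \<le> wsync (loc (r k) i) i"
    using wsync_self_max_run[OF assms(3)] unfolding wsync_self_max_def by blast
  then show ?thesis
    using assms(4) by (intro Max_eqI[symmetric]) auto
qed

end
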